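(* Let $G$ be a graph and let $\lambda$ be a partition of $|V(G)|$. For any special rim hook tabloid $T\in\mathcal{T}(\lambda)$ with $N_G(T)>0$, we have the following. (1) Every part $\pi_i$ in $\pi(T)$ is less than or equal to the independence number $\alpha(G)$. (2) The length of $\pi(T)$ is less than or equal to the length of $\lambda$. (3) If every stable partition of $G$ contains a singleton stable set, then some part $\pi_i$ in $\pi(T)$ equals $1$.
   Context: A stable partition of $G$ is a set partition of $V(G)$ into stable sets; its type is the integer partition of block sizes. A rim hook in a (French-notation) Young diagram is a sequence of connected cells starting on the northeast boundary, travelling along the northeast edge, whose removal leaves the diagram of a smaller partition. A rim hook tabloid of shape $\lambda$ is a successive decomposition of the Young diagram of $\lambda$ into rim hooks (each removal leaving a partition shape), labels forgotten; it is special if every rim hook intersects the first column. $\mathcal{T}(\lambda)$ is the set of special rim hook tabloids of shape $\lambda$, $\pi(T)=(\pi_1,\pi_2,\dots)$ is the list of rim hook lengths of $T$ from top to bottom, and $N_G(T)$ is the number of stable partitions of $G$ whose type is (the partition obtained by sorting) $\pi(T)$. *)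

theory Defs
  imports Main "HOL-Library.Multiset"
begin

definition simple_graph :: "'a set \<Rightarrow> ('a \<Rightarrow> 'a \<Rightarrow> bool) \<Rightarrow> bool" where
  "simple_graph V E \<longleftrightarrow> finite V \<and> (\<forall>x y. E x y \<longrightarrow> E y x) \<and> (\<forall>x. \<not> E x x)
     \<and> (\<forall>x y. E x y \<longrightarrow> x \<in> V \<and> y \<in> V)"

definition stable_set :: "'a set \<Rightarrow> ('a \<Rightarrow> 'a \<Rightarrow> bool) \<Rightarrow> 'a set \<Rightarrow> bool" where
  "stable_set V E S \<longleftrightarrow> S \<subseteq> V \<and> (\<forall>x\<in>S. \<forall>y\<in>S. \<not> E x y)"

definition independence_number :: "'a set \<Rightarrow> ('a \<Rightarrow> 'a \<Rightarrow> bool) \<Rightarrow> nat" where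
  "independence_number V E = Max {card S | S. stable_set V E S}"

definition stable_partition :: "'a set \<Rightarrow> ('a \<Rightarrow> 'a \<Rightarrow> bool) \<Rightarrow> 'a set set \<Rightarrow> bool" where
  "stable_partition V E P \<longleftrightarrow> \<Union>P = V \<and> {} \<notin> P
     \<and> (\<forall>A\<in>P. \<forall>B\<in>P. A \<noteq> B \<longrightarrow> A \<inter> B = {}) \<and> (\<forall>B\<in>P. stable_set V E B)"

definition ptype :: "'a set set \<Rightarrow> nat list" where
  "ptype P = rev (sorted_list_of_multiset (image_mset card (mset_set P)))"

definition is_partition :: "nat list \<Rightarrow> bool" where
  "is_partition la \<longleftrightarrow> sorted (rev la) \<and> 0 \<notin> set la"

text \<open>Cells (i,j): row i (row 0 at the bottom, French notation), column j (column 0 is the first column).\<close>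
definition cells :: "nat list \<Rightarrow> (nat \<times> nat) set" where
  "cells la = {(i, j). i < length la \<and> j < la ! i}"

definition adjacent_cell :: "nat \<times> nat \<Rightarrow> nat \<times> nat \<Rightarrow> bool" where
  "adjacent_cell c d \<longleftrightarrow> (fst c = fst d \<and> (snd c = Suc (snd d) \<or> snd d = Suc (snd c)))
                       \<or> (snd c = snd d \<and> (fst c = Suc (fst d) \<or> fst d = Suc (fst c)))"

definition connected_cells :: "(nat \<times> nat) set \<Rightarrow> bool" where
  "connected_cells h \<longleftrightarrow> (\<forall>c\<in>h. \<forall>d\<in>h. (\<lambda>x y. x \<in> h \<and> y \<in> h \<and> adjacent_cell x y)\<^sup>*\<^sup>* c d)"

definition no_2x2 :: "(nat \<times> nat) set \<Rightarrow> bool" where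
  "no_2x2 h \<longleftrightarrow> \<not> (\<exists>i j. (i, j) \<in> h \<and> (Suc i, j) \<in> h \<and> (i, Suc j) \<in> h \<and> (Suc i, Suc j) \<in> h)"

definition rim_hook :: "nat list \<Rightarrow> nat list \<Rightarrow> (nat \<times> nat) set \<Rightarrow> bool" where
  "rim_hook la mu h \<longleftrightarrow> is_partition la \<and> is_partition mu \<and> h \<noteq> {} \<and> h \<subseteq> cells la
     \<and> cells mu = cells la - h \<and> connected_cells h \<and> no_2x2 h"

text \<open>Rim hook tabloids of shape la, with labels forgotten: the set of rim hooks of a
  successive decomposition of la into rim hooks.\<close>
inductive rim_hook_tabloid :: "nat list \<Rightarrow> (nat \<times> nat) set set \<Rightarrow> bool" where
  empty: "rim_hook_tabloid [] {}"
| step: "rim_hook la mu h \<Longrightarrow> rim_hook_tabloid mu T \<Longrightarrow> rim_hook_tabloid la (insert h T)"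

definition special_rht :: "nat list \<Rightarrow> (nat \<times> nat) set set \<Rightarrow> bool" where
  "special_rht la T \<longleftrightarrow> rim_hook_tabloid la T \<and> (\<forall>h\<in>T. \<exists>i. (i, 0) \<in> h)"

definition top_row :: "(nat \<times> nat) set \<Rightarrow> nat" where
  "top_row h = Max {i. (i, 0) \<in> h}"

text \<open>pi(T): the list of rim hook lengths, from top to bottom.\<close>
definition hook_lengths :: "(nat \<times> nat) set set \<Rightarrow> nat list" where
  "hook_lengths T = map (\<lambda>r. card (THE h. h \<in> T \<and> top_row h = r))
                        (rev (sorted_list_of_set (top_row ` T)))"

definition N_G :: "'a set \<Rightarrow> ('a \<Rightarrow> 'a \<Rightarrow> bool) \<Rightarrow> (nat \<times> nat) set set \<Rightarrow> nat" where
  "N_G V E T = card {P. stable_partition V E P \<and> ptype P = rev (sort (hook_lengths T))}"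

end

theory Submission
  imports Defs
begin

text \<open>If \<open>N_G(T) > 0\<close>, some stable partition \<open>P\<close> of \<open>G\<close> has type \<open>\<pi>(T)\<close>, so the parts of
  \<open>\<pi>(T)\<close> are exactly the sizes of the blocks of \<open>P\<close>. Blocks are stable sets, hence of size at most
  \<open>\<alpha>(G)\<close>, and if every stable partition has a singleton block then \<open>1\<close> is a part of \<open>\<pi>(T)\<close>.
  The length of \<open>\<pi>(T)\<close> is the number of distinct top rows in which the hooks of \<open>T\<close> meet the
  first column, and each of them is a row of \<open>\<lambda>\<close>.\<close>

lemma finite_cells: "finite (cells la)"
proof (rule finite_subset)
  show "cells la \<subseteq> {..<length la} \<times> {..<Max (set la \<union> {0})}"
  proof
    fix c assume "c \<in> cells la"
    then obtain i j where c: "c = (i, j)" "i < length la" "j < la ! i"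
      unfolding cells_def by auto
    have "la ! i \<le> Max (set la \<union> {0})" using c(2) by (intro Max_ge) auto
    with c(3) have "j < Max (set la \<union> {0})" by linarith
    with c(1,2) show "c \<in> {..<length la} \<times> {..<Max (set la \<union> {0})}" by blast
  qed
qed simp

lemma rim_hook_tabloid_subset_cells:
  "rim_hook_tabloid la T \<Longrightarrow> h \<in> T \<Longrightarrow> h \<subseteq> cells la"
  by (induction arbitrary: h rule: rim_hook_tabloid.induct) (auto simp: rim_hook_def)

lemma special_rht_top_row_less_length:
  assumes "special_rht la T" and "h \<in> T"
  shows "top_row h < length la"
proof -
  have sub: "h \<subseteq> cells la"
    using assms rim_hook_tabloid_subset_cells unfolding special_rht_def by blast
  have "{i. (i, 0) \<in> h} \<subseteq> fst ` h" by force
  then have "finite {i. (i, 0) \<in> h}"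
    using sub finite_cells by (meson finite_imageI finite_subset)
  moreover have "{i. (i, 0) \<in> h} \<noteq> {}" using assms unfolding special_rht_def by auto
  ultimately have "(top_row h, 0) \<in> h" unfolding top_row_def using Max_in by blast
  with sub show ?thesis unfolding cells_def by auto
qed

lemma length_hook_lengths_le_length:
  assumes "special_rht la T"
  shows "length (hook_lengths T) \<le> length la"
proof -
  have rows: "top_row ` T \<subseteq> {..<length la}"
    using special_rht_top_row_less_length[OF assms] by auto
  have "length (hook_lengths T) = card (top_row ` T)" unfolding hook_lengths_def by simp
  also have "\<dots> \<le> length la" using card_mono[OF _ rows] by simp
  finally show ?thesis .
qed

lemma set_ptype: "finite P \<Longrightarrow> set (ptype P) = card ` P"
  unfolding ptype_def by simp

lemma stable_partition_finite:
  "finite V \<Longrightarrow> stable_partition V E P \<Longrightarrow> finite P"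
  unfolding stable_partition_def by (meson Sup_le_iff finite_Pow_iff finite_subset subsetI PowI)

lemma card_le_independence_number:
  assumes "finite V" and "stable_set V E S"
  shows "card S \<le> independence_number V E"
proof -
  have "{card S | S. stable_set V E S} \<subseteq> card ` Pow V" unfolding stable_set_def by auto
  then have "finite {card S | S. stable_set V E S}"
    using assms(1) by (meson finite_Pow_iff finite_imageI finite_subset)
  then show ?thesis unfolding independence_number_def using assms(2) by (intro Max_ge) auto
qed

lemma N_G_pos_imp_stable_partition:
  assumes "finite V" and "N_G V E T > 0"
  obtains P where "stable_partition V E P" and "set (hook_lengths T) = card ` P"
proof -
  obtain P where P: "stable_partition V E P" "ptype P = rev (sort (hook_lengths T))"
    using assms(2) unfolding N_G_def by (metis (mono_tags, lifting) card.empty empty_Collect_eq less_irrefl)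
  have "set (hook_lengths T) = set (ptype P)" using P(2) by simp
  also have "\<dots> = card ` P" using set_ptype stable_partition_finite[OF assms(1) P(1)] by blast
  finally show ?thesis using that P(1) by blast
qed

theorem lemma3p2:
  fixes V :: "'a set" and E :: "'a \<Rightarrow> 'a \<Rightarrow> bool" and la :: "nat list"
    and T :: "(nat \<times> nat) set set"
  assumes "simple_graph V E"
    and "is_partition la" and "sum_list la = card V"
    and "special_rht la T"
    and "N_G V E T > 0"
  shows "(\<forall>p \<in> set (hook_lengths T). p \<le> independence_number V E)
       \<and> length (hook_lengths T) \<le> length la
       \<and> ((\<forall>P. stable_partition V E P \<longrightarrow> (\<exists>B\<in>P. card B = 1)) \<longrightarrow> 1 \<in> set (hook_lengths T))"
proof -
  have finV: "finite V" using assms(1) unfolding simple_graph_def by simp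
  obtain P where P: "stable_partition V E P" and parts: "set (hook_lengths T) = card ` P"
    using N_G_pos_imp_stable_partition[OF finV assms(5)] .
  have "\<forall>p \<in> set (hook_lengths T). p \<le> independence_number V E"
    using P card_le_independence_number[OF finV] unfolding parts stable_partition_def by auto
  moreover have "length (hook_lengths T) \<le> length la"
    using length_hook_lengths_le_length[OF assms(4)] .
  moreover have "(\<forall>P. stable_partition V E P \<longrightarrow> (\<exists>B\<in>P. card B = 1)) \<longrightarrow> 1 \<in> set (hook_lengths T)"
    using P parts by force
  ultimately show ?thesis by blast
qed

end
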